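(* For every integer $n\geq 2$, $\operatorname{adim}(P_2\square P_n)\leq \left\lceil \frac{3n-1}{4}\right\rceil$.
   Context: $P_n$ is the path on $n$ vertices and $\square$ is the Cartesian product of graphs. For a graph $G$, $d(u,v)$ is the shortest-path distance and $d_1(u,v)=\min(d(u,v),2)$. A set $A\subseteq V(G)$ is an adjacency resolving set if for all distinct $x,y\in V(G)$ there is $z\in A$ with $d_1(z,x)\neq d_1(z,y)$; $\operatorname{adim}(G)$ is the minimum cardinality of an adjacency resolving set. *)

theory Defs
  imports Main "HOL-Library.Extended_Nat"
begin

text \<open>A (simple) graph is given by a vertex set V and a symmetric irreflexive
adjacency relation E restricted to V.\<close>

fun walk :: "('a \<Rightarrow> 'a \<Rightarrow> bool) \<Rightarrow> 'a list \<Rightarrow> bool" where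
  "walk E [] = True"
| "walk E [x] = True"
| "walk E (x # y # xs) = (E x y \<and> walk E (y # xs))"

text \<open>Shortest-path distance (infinity if there is no path); a walk with
k+1 vertices has length k.\<close>
definition gdist :: "'a set \<Rightarrow> ('a \<Rightarrow> 'a \<Rightarrow> bool) \<Rightarrow> 'a \<Rightarrow> 'a \<Rightarrow> enat" where
  "gdist V E u v = (INF xs \<in> {xs. xs \<noteq> [] \<and> set xs \<subseteq> V \<and> walk E xs \<and> hd xs = u \<and> last xs = v}.
                      enat (length xs - 1))"

definition gdist1 :: "'a set \<Rightarrow> ('a \<Rightarrow> 'a \<Rightarrow> bool) \<Rightarrow> 'a \<Rightarrow> 'a \<Rightarrow> enat" where
  "gdist1 V E u v = min (gdist V E u v) 2"

definition adj_resolving :: "'a set \<Rightarrow> ('a \<Rightarrow> 'a \<Rightarrow> bool) \<Rightarrow> 'a set \<Rightarrow> bool" where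
  "adj_resolving V E A \<longleftrightarrow> A \<subseteq> V \<and>
     (\<forall>x\<in>V. \<forall>y\<in>V. x \<noteq> y \<longrightarrow> (\<exists>z\<in>A. gdist1 V E z x \<noteq> gdist1 V E z y))"

definition adim :: "'a set \<Rightarrow> ('a \<Rightarrow> 'a \<Rightarrow> bool) \<Rightarrow> nat" where
  "adim V E = (LEAST k. \<exists>A. finite A \<and> adj_resolving V E A \<and> card A = k)"

definition path_V :: "nat \<Rightarrow> nat set" where
  "path_V n = {0..<n}"

definition path_E :: "nat \<Rightarrow> nat \<Rightarrow> nat \<Rightarrow> bool" where
  "path_E n i j \<longleftrightarrow> i < n \<and> j < n \<and> (j = i + 1 \<or> i = j + 1)"

definition cart_V :: "'a set \<Rightarrow> 'b set \<Rightarrow> ('a \<times> 'b) set" where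
  "cart_V V1 V2 = V1 \<times> V2"

definition cart_E :: "'a set \<Rightarrow> ('a \<Rightarrow> 'a \<Rightarrow> bool) \<Rightarrow> 'b set \<Rightarrow> ('b \<Rightarrow> 'b \<Rightarrow> bool)
    \<Rightarrow> 'a \<times> 'b \<Rightarrow> 'a \<times> 'b \<Rightarrow> bool" where
  "cart_E V1 E1 V2 E2 p q \<longleftrightarrow> p \<in> V1 \<times> V2 \<and> q \<in> V1 \<times> V2 \<and>
     ((fst p = fst q \<and> E2 (snd p) (snd q)) \<or> (snd p = snd q \<and> E1 (fst p) (fst q)))"

end

theory Submission
  imports Defs
begin

(*
  Seen from a vertex z, another vertex is at truncated distance 0, 1 or 2, so a set A is
  adjacency resolving as soon as every two vertices outside A are told apart by some z in A
  adjacent to exactly one of them.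

  On the ladder with rows 0, 1 and columns 0, ..., n - 1 take, with period 8, row 0 of column 0,
  both rows of columns 2 and 6 and row 1 of column 4: six vertices per eight columns. Depending
  on n mod 8, the last zero, one or two columns are replaced by a single vertex each in a fixed
  row, which repairs the right end and keeps the size at most (3n + 2) / 4.

  Two vertices outside A more than two columns apart are separated by any neighbour in A of the
  left one. Otherwise everything happens in a window of five consecutive columns, whose content
  depends only on a residue mod 8 and on the distance to the right end capped at 7; this leaves
  a finite check.
*)

lemma gdist1_eq:
  assumes "u \<in> V" "v \<in> V"
  shows "gdist1 V E u v = (if u = v then 0 else if E u v then 1 else 2)"
proof -
  let ?W = "{xs. xs \<noteq> [] \<and> set xs \<subseteq> V \<and> walk E xs \<and> hd xs = u \<and> last xs = v}"
  have gdist_le: "gdist V E u v \<le> enat (length xs - 1)" if "xs \<in> ?W" for xs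
    unfolding gdist_def using that by (rule INF_lower)
  have gdist_ge: "enat k \<le> gdist V E u v" if "\<And>xs. xs \<in> ?W \<Longrightarrow> k < length xs" for k
    unfolding gdist_def
  proof (rule INF_greatest)
    fix xs assume "xs \<in> ?W"
    then show "enat k \<le> enat (length xs - 1)" using that by fastforce
  qed
  have long_walk: "1 < length xs" if "xs \<in> ?W" "u \<noteq> v" for xs
    using that by (cases xs rule: remdups_adj.cases) auto
  have longer_walk: "2 < length xs" if "xs \<in> ?W" "u \<noteq> v" "\<not> E u v" for xs
    using that by (cases xs rule: remdups_adj.cases) auto
  show ?thesis
  proof (cases "u = v")
    case True
    then have "gdist V E u v \<le> enat 0" using gdist_le[of "[u]"] assms by simp
    then have "gdist V E u v = 0" by (metis le_zero_eq zero_enat_def)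
    with True show ?thesis by (simp add: gdist1_def)
  next
    case False
    then have "enat 1 \<le> gdist V E u v" using long_walk by (intro gdist_ge)
    show ?thesis
    proof (cases "E u v")
      case True
      then have "gdist V E u v \<le> enat 1" using gdist_le[of "[u, v]"] assms by simp
      with \<open>enat 1 \<le> gdist V E u v\<close> have "gdist V E u v = 1"
        by (metis antisym one_enat_def)
      with False True show ?thesis by (simp add: gdist1_def)
    next
      case nonadj: False
      have "enat 2 \<le> gdist V E u v" using longer_walk False nonadj by (intro gdist_ge)
      with False nonadj show ?thesis by (simp add: gdist1_def numeral_eq_enat min_def)
    qed
  qed
qed

lemma adj_resolvingI:
  assumes "A \<subseteq> V"
    and "\<And>x y. x \<in> V - A \<Longrightarrow> y \<in> V - A \<Longrightarrow> x \<noteq> y \<Longrightarrow> \<exists>z\<in>A. E z x \<noteq> E z y"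
  shows "adj_resolving V E A"
  unfolding adj_resolving_def
proof (intro conjI assms(1) ballI impI)
  fix x y assume xy: "x \<in> V" "y \<in> V" "x \<noteq> y"
  show "\<exists>z\<in>A. gdist1 V E z x \<noteq> gdist1 V E z y"
  proof (cases "x \<in> A \<or> y \<in> A")
    case True
    with xy assms(1) show ?thesis by (auto simp: gdist1_eq subset_iff)
  next
    case False
    with xy assms(2) obtain z where "z \<in> A" "E z x \<noteq> E z y" by blast
    with False xy assms(1) show ?thesis by (auto simp: gdist1_eq subset_iff)
  qed
qed

lemma adim_le_card:
  assumes "finite A" "adj_resolving V E A"
  shows "adim V E \<le> card A"
  unfolding adim_def using assms by (intro Least_le) blast

lemma sum_lessThan_add:
  "(\<Sum>i<m + k. f i) = (\<Sum>i<m. f i) + (\<Sum>i<k. f (m + i))" for m k :: nat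
  by (induction k) (simp_all add: add_ac)

lemma sum_lessThan_mod:
  fixes f :: "nat \<Rightarrow> 'a::comm_semiring_1"
  shows "(\<Sum>i<p * q + s. f (i mod p)) = of_nat q * (\<Sum>i<p. f i) + (\<Sum>i<s. f (i mod p))"
proof (induction q)
  case (Suc q)
  have "(\<Sum>i<p * Suc q + s. f (i mod p)) =
      (\<Sum>i<p. f (i mod p)) + (\<Sum>i<p * q + s. f ((p + i) mod p))"
    using sum_lessThan_add[of "\<lambda>i. f (i mod p)" p "p * q + s"] by (simp add: add_ac)
  also have "(\<Sum>i<p. f (i mod p)) = (\<Sum>i<p. f i)" by simp
  finally show ?case using Suc.IH by (simp add: algebra_simps)
qed simp

lemma ex_less_2_iff: "(\<exists>c<2. P c) \<longleftrightarrow> P 0 \<or> P (1::nat)"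
  by (auto simp: less_2_cases_iff)

lemma ex_le_4_iff: "(\<exists>m\<le>4. P m) \<longleftrightarrow> P 0 \<or> P 1 \<or> P 2 \<or> P 3 \<or> P (4::nat)"
  by (auto simp: le_Suc_eq numeral_eq_Suc)

definition ladder_adj :: "nat \<times> nat \<Rightarrow> nat \<times> nat \<Rightarrow> bool" where
  "ladder_adj p q \<longleftrightarrow>
     (fst p = fst q \<and> (snd q = snd p + 1 \<or> snd p = snd q + 1)) \<or>
     (snd p = snd q \<and> fst p \<noteq> fst q)"

lemma ladder_V: "cart_V (path_V 2) (path_V n) = {..<2} \<times> {..<n}"
  by (auto simp: cart_V_def path_V_def)

lemma ladder_E:
  "cart_E (path_V 2) (path_E 2) (path_V n) (path_E n) p q \<longleftrightarrow>
     p \<in> {..<2} \<times> {..<n} \<and> q \<in> {..<2} \<times> {..<n} \<and> ladder_adj p q"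
  by (auto simp: cart_E_def path_V_def path_E_def ladder_adj_def)

definition ladder_pattern :: "nat \<Rightarrow> nat \<Rightarrow> bool" where
  "ladder_pattern a r \<longleftrightarrow> r = 2 \<or> r = 6 \<or> (r = 0 \<and> a = 0) \<or> (r = 4 \<and> a = 1)"

definition tail_length :: "nat \<Rightarrow> nat" where
  "tail_length n = (if n mod 8 \<in> {1, 5} then 0 else if n mod 8 \<in> {0, 4} then 2 else 1)"

definition tail_row :: "nat \<Rightarrow> nat" where
  "tail_row n = (if n mod 8 \<in> {2, 3, 4} then 0 else 1)"

definition ladder_resolving_set :: "nat \<Rightarrow> (nat \<times> nat) set" where
  "ladder_resolving_set n = {(a, i). a < 2 \<and> i < n \<and>
     (if i + tail_length n < n then ladder_pattern a (i mod 8) else a = tail_row n)}"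

lemma tail_length_le: "tail_length n \<le> 2"
  by (simp add: tail_length_def)

lemma tail_length_cong: "m mod 8 = n mod 8 \<Longrightarrow> tail_length m = tail_length n"
  by (simp add: tail_length_def)

lemma tail_row_cong: "m mod 8 = n mod 8 \<Longrightarrow> tail_row m = tail_row n"
  by (simp add: tail_row_def)

definition pattern_window :: "nat \<Rightarrow> nat \<Rightarrow> nat \<Rightarrow> nat \<Rightarrow> bool" where
  "pattern_window r d a m \<longleftrightarrow> a < 2 \<and> m < d \<and>
     (if m + tail_length (r + d) < d then ladder_pattern a ((r + m) mod 8)
      else a = tail_row (r + d))"

(*
  Position m of the window is column i + m - 1 of the ladder; for i = 0 the nonexistent
  column -1 is modelled as an empty pattern column of residue 7.
*)
lemma pattern_window_iff:
  assumes "2 \<le> n" "i \<le> n" "m \<le> 4"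
  shows "pattern_window ((i + 7) mod 8) (min (n + 1 - i) 7) a m \<longleftrightarrow>
    1 \<le> i + m \<and> (a, i + m - 1) \<in> ladder_resolving_set n"
proof (cases "i + m = 0")
  case True
  with assms(1) tail_length_le[of "7 + min (n + 1) 7"] show ?thesis
    by (auto simp: pattern_window_def ladder_pattern_def)
next
  case False
  then have pos: "1 \<le> i + m" by linarith
  define c where "c = i + m - 1"
  have "i + 7 + m = c + 8" using pos by (simp add: c_def)
  then have residue: "((i + 7) mod 8 + m) mod 8 = c mod 8"
    by (metis mod_add_left_eq mod_add_self2)
  show ?thesis
  proof (cases "n + 1 - i \<le> 7")
    case True
    have "i + 7 + (n + 1 - i) = n + 8" using assms(2) by simp
    then have "((i + 7) mod 8 + (n + 1 - i)) mod 8 = n mod 8"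
      by (metis mod_add_left_eq mod_add_self2)
    then have "tail_length ((i + 7) mod 8 + (n + 1 - i)) = tail_length n"
      "tail_row ((i + 7) mod 8 + (n + 1 - i)) = tail_row n"
      by (auto intro: tail_length_cong tail_row_cong)
    moreover have "m < n + 1 - i \<longleftrightarrow> c < n"
      "m + tail_length n < n + 1 - i \<longleftrightarrow> c + tail_length n < n"
      using assms(2) pos by (auto simp: c_def)
    ultimately show ?thesis using True pos residue
      unfolding c_def[symmetric] by (simp add: pattern_window_def ladder_resolving_set_def)
  next
    case False
    then have "c + tail_length n < n" "m + tail_length ((i + 7) mod 8 + 7) < 7"
      using tail_length_le[of n] tail_length_le[of "(i + 7) mod 8 + 7"] assms(3)
      by (auto simp: c_def)
    with False pos residue assms(3) show ?thesis
      unfolding c_def[symmetric] by (simp add: pattern_window_def ladder_resolving_set_def)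
  qed
qed

lemma pattern_window_locating:
  assumes "r < 8" "2 \<le> d" "d \<le> 7" "a < 2" "b < 2" "t \<le> 2" "t + 2 \<le> d"
    "(a, 1) \<noteq> (b, t + 1)" "\<not> pattern_window r d a 1" "\<not> pattern_window r d b (t + 1)"
  shows "\<exists>c<2. \<exists>m\<le>4. pattern_window r d c m \<and>
    ladder_adj (c, m) (a, 1) \<noteq> ladder_adj (c, m) (b, t + 1)"
proof -
  have "r = 0 \<or> r = 1 \<or> r = 2 \<or> r = 3 \<or> r = 4 \<or> r = 5 \<or> r = 6 \<or> r = 7"
    "d = 2 \<or> d = 3 \<or> d = 4 \<or> d = 5 \<or> d = 6 \<or> d = 7"
    "a = 0 \<or> a = 1" "b = 0 \<or> b = 1" "t = 0 \<or> t = 1 \<or> t = 2"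
    using assms by linarith+
  then show ?thesis using assms(7-10) unfolding ex_less_2_iff ex_le_4_iff
    by (elim disjE) (simp_all add: pattern_window_def ladder_adj_def ladder_pattern_def
        tail_length_def tail_row_def)
qed

lemma pattern_window_dominating:
  assumes "r < 8" "5 \<le> d" "d \<le> 7" "a < 2" "\<not> pattern_window r d a 1"
  shows "\<exists>c<2. \<exists>m\<le>4. pattern_window r d c m \<and> ladder_adj (c, m) (a, 1)"
proof -
  have "r = 0 \<or> r = 1 \<or> r = 2 \<or> r = 3 \<or> r = 4 \<or> r = 5 \<or> r = 6 \<or> r = 7"
    "d = 5 \<or> d = 6 \<or> d = 7" "a = 0 \<or> a = 1"
    using assms by linarith+
  then show ?thesis using assms(5) unfolding ex_less_2_iff ex_le_4_iff
    by (elim disjE) (simp_all add: pattern_window_def ladder_adj_def ladder_pattern_def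
        tail_length_def tail_row_def)
qed

lemma ladder_adj_shift:
  "1 \<le> i + m \<Longrightarrow> 1 \<le> k \<Longrightarrow>
    ladder_adj (c, i + m - 1) (a, i + k - 1) = ladder_adj (c, m) (a, k)"
  by (auto simp: ladder_adj_def)

lemma ladder_resolving_set_locating_near:
  assumes "2 \<le> n" "a < 2" "b < 2" "i \<le> j" "j \<le> i + 2" "j < n" "(a, i) \<noteq> (b, j)"
    "(a, i) \<notin> ladder_resolving_set n" "(b, j) \<notin> ladder_resolving_set n"
  shows "\<exists>z\<in>ladder_resolving_set n. ladder_adj z (a, i) \<noteq> ladder_adj z (b, j)"
proof -
  define r d t where "r = (i + 7) mod 8" and "d = min (n + 1 - i) 7" and "t = j - i"
  have "i \<le> n" using assms(4,6) by simp
  note window = pattern_window_iff[OF assms(1) this, folded r_def d_def]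
  have j: "i + (t + 1) - 1 = j" using assms(4) by (simp add: t_def)
  have "t \<le> 2" using assms(5) by (simp add: t_def)
  have "\<not> pattern_window r d a 1" "\<not> pattern_window r d b (t + 1)"
    using window[of 1 a] window[of "t + 1" b] assms(8,9) j \<open>t \<le> 2\<close> by simp_all
  moreover have "r < 8" "2 \<le> d" "d \<le> 7" "t + 2 \<le> d" "(a, 1) \<noteq> (b, t + 1)"
    using assms(4-7) j by (auto simp: r_def d_def t_def)
  ultimately obtain c m where cm: "m \<le> 4" "pattern_window r d c m"
      "ladder_adj (c, m) (a, 1) \<noteq> ladder_adj (c, m) (b, t + 1)"
    using pattern_window_locating assms(2,3) \<open>t \<le> 2\<close> by blast
  then have "1 \<le> i + m" "(c, i + m - 1) \<in> ladder_resolving_set n"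
    using window[of m c] by auto
  moreover have "ladder_adj (c, i + m - 1) (a, i) \<noteq> ladder_adj (c, i + m - 1) (b, j)"
    using cm(3) ladder_adj_shift[OF \<open>1 \<le> i + m\<close>, of 1 c a]
      ladder_adj_shift[OF \<open>1 \<le> i + m\<close>, of "t + 1" c b] j
    by simp
  ultimately show ?thesis by blast
qed

lemma ladder_resolving_set_dominating:
  assumes "2 \<le> n" "a < 2" "i + 4 \<le> n" "(a, i) \<notin> ladder_resolving_set n"
  shows "\<exists>z\<in>ladder_resolving_set n. ladder_adj z (a, i)"
proof -
  define r d where "r = (i + 7) mod 8" and "d = min (n + 1 - i) 7"
  have "i \<le> n" using assms(3) by simp
  note window = pattern_window_iff[OF assms(1) this, folded r_def d_def]
  have "\<not> pattern_window r d a 1" using window[of 1 a] assms(4) by simp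
  moreover have "r < 8" "5 \<le> d" "d \<le> 7" using assms(3) by (auto simp: r_def d_def)
  ultimately obtain c m where cm: "m \<le> 4" "pattern_window r d c m" "ladder_adj (c, m) (a, 1)"
    using pattern_window_dominating assms(2) by blast
  then have "1 \<le> i + m" "(c, i + m - 1) \<in> ladder_resolving_set n"
    using window[of m c] by auto
  moreover have "ladder_adj (c, i + m - 1) (a, i)"
    using cm(3) ladder_adj_shift[OF \<open>1 \<le> i + m\<close>, of 1 c a] by simp
  ultimately show ?thesis by blast
qed

lemma ladder_resolving_set_locating_ordered:
  assumes "2 \<le> n" "a < 2" "b < 2" "i \<le> j" "j < n" "(a, i) \<noteq> (b, j)"
    "(a, i) \<notin> ladder_resolving_set n" "(b, j) \<notin> ladder_resolving_set n"
  shows "\<exists>z\<in>ladder_resolving_set n. ladder_adj z (a, i) \<noteq> ladder_adj z (b, j)"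
proof (cases "j \<le> i + 2")
  case True
  with assms show ?thesis by (intro ladder_resolving_set_locating_near) auto
next
  case False
  with assms obtain z where "z \<in> ladder_resolving_set n" "ladder_adj z (a, i)"
    using ladder_resolving_set_dominating[of n a i] by auto
  moreover from this(2) False have "\<not> ladder_adj z (b, j)"
    by (auto simp: ladder_adj_def)
  ultimately show ?thesis by blast
qed

lemma ladder_resolving_set_locating:
  assumes "2 \<le> n" "x \<in> {..<2} \<times> {..<n} - ladder_resolving_set n"
    "y \<in> {..<2} \<times> {..<n} - ladder_resolving_set n" "x \<noteq> y"
  shows "\<exists>z\<in>ladder_resolving_set n. ladder_adj z x \<noteq> ladder_adj z y"
proof -
  obtain a i b j where xy: "x = (a, i)" "y = (b, j)" by fastforce
  show ?thesis
  proof (cases "i \<le> j")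
    case True
    with assms show ?thesis unfolding xy by (intro ladder_resolving_set_locating_ordered) auto
  next
    case False
    with assms have "\<exists>z\<in>ladder_resolving_set n. ladder_adj z y \<noteq> ladder_adj z x"
      unfolding xy by (intro ladder_resolving_set_locating_ordered) auto
    then show ?thesis by metis
  qed
qed

lemma adj_resolving_ladder_resolving_set:
  assumes "2 \<le> n"
  shows "adj_resolving (cart_V (path_V 2) (path_V n))
    (cart_E (path_V 2) (path_E 2) (path_V n) (path_E n)) (ladder_resolving_set n)"
proof (rule adj_resolvingI)
  show "ladder_resolving_set n \<subseteq> cart_V (path_V 2) (path_V n)"
    by (auto simp: ladder_V ladder_resolving_set_def)
  fix x y
  assume "x \<in> cart_V (path_V 2) (path_V n) - ladder_resolving_set n"
    "y \<in> cart_V (path_V 2) (path_V n) - ladder_resolving_set n" "x \<noteq> y"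
  with assms obtain z where "z \<in> ladder_resolving_set n" "ladder_adj z x \<noteq> ladder_adj z y"
    using ladder_resolving_set_locating unfolding ladder_V by blast
  with \<open>ladder_resolving_set n \<subseteq> _\<close> show
    "\<exists>z\<in>ladder_resolving_set n. cart_E (path_V 2) (path_E 2) (path_V n) (path_E n) z x \<noteq>
       cart_E (path_V 2) (path_E 2) (path_V n) (path_E n) z y"
    using \<open>x \<in> _\<close> \<open>y \<in> _\<close> unfolding ladder_E ladder_V by blast
qed

lemma card_ladder_resolving_set_columns:
  "card (ladder_resolving_set n) = (\<Sum>i<n. \<Sum>a<2. of_bool ((a, i) \<in> ladder_resolving_set n))"
proof -
  let ?S = "ladder_resolving_set n"
  have "?S \<subseteq> {..<2} \<times> {..<n}"
    by (auto simp: ladder_resolving_set_def)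
  then have "card ?S = (\<Sum>p\<in>{..<2} \<times> {..<n}. of_bool (p \<in> ?S))"
    by (simp add: Int_absorb1 Int_absorb2)
  also have "\<dots> = (\<Sum>a<2. \<Sum>i<n. of_bool ((a, i) \<in> ?S))"
    by (simp only: sum.cartesian_product case_prod_unfold prod.collapse)
  finally show ?thesis by (simp only: sum.swap[of _ "{..<2}"])
qed

lemma ladder_pattern_prefix_bound:
  assumes "s < 8" "tail_length (s + c) = c"
  shows "4 * (\<Sum>i<s. \<Sum>a<2. of_bool (ladder_pattern a i) :: nat) + c \<le> 3 * s + 2"
proof -
  have "s = 0 \<or> s = 1 \<or> s = 2 \<or> s = 3 \<or> s = 4 \<or> s = 5 \<or> s = 6 \<or> s = 7"
    "c = 0 \<or> c = 1 \<or> c = 2"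
    using assms tail_length_le[of "s + c"] by linarith+
  then show ?thesis using assms(2)
    by (elim disjE)
      (simp_all add: tail_length_def, simp_all add: ladder_pattern_def eval_nat_numeral)
qed

lemma card_ladder_resolving_set:
  assumes "2 \<le> n"
  shows "4 * card (ladder_resolving_set n) \<le> 3 * n + 2"
proof -
  let ?S = "ladder_resolving_set n"
  let ?column = "\<lambda>i. \<Sum>a<2. of_bool ((a, i) \<in> ?S) :: nat"
  let ?pattern = "\<lambda>r. \<Sum>a<2. of_bool (ladder_pattern a r) :: nat"
  define c q s where "c = tail_length n" and "q = (n - c) div 8" and "s = (n - c) mod 8"
  have n: "n = 8 * q + s + c"
    using tail_length_le[of n] assms by (simp add: c_def q_def s_def)
  have "s < 8" by (simp add: s_def)
  have "card ?S = (\<Sum>i<8 * q + s. ?column i) + (\<Sum>i<c. ?column (8 * q + s + i))"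
    unfolding card_ladder_resolving_set_columns by (subst n) (rule sum_lessThan_add)
  also have "(\<Sum>i<8 * q + s. ?column i) = (\<Sum>i<8 * q + s. ?pattern (i mod 8))"
  proof (rule sum.cong)
    fix i assume "i \<in> {..<8 * q + s}"
    then have "i + tail_length n < n" using n c_def by simp
    then show "?column i = ?pattern (i mod 8)"
      by (intro sum.cong) (auto simp: ladder_resolving_set_def)
  qed simp
  also have "\<dots> = 6 * q + (\<Sum>i<s. ?pattern i)"
  proof -
    have "(\<Sum>i<s. ?pattern (i mod 8)) = (\<Sum>i<s. ?pattern i)"
      using \<open>s < 8\<close> by (intro sum.cong) auto
    moreover have "(\<Sum>r<8. ?pattern r) = 6"
      by (simp add: eval_nat_numeral ladder_pattern_def)
    ultimately show ?thesis using sum_lessThan_mod[of ?pattern 8 q s] by simp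
  qed
  also have "(\<Sum>i<c. ?column (8 * q + s + i)) = c"
  proof -
    have "?column (8 * q + s + i) = 1" if "i < c" for i
    proof -
      have "8 * q + s + i < n" "\<not> 8 * q + s + i + tail_length n < n"
        using that n c_def by linarith+
      then have "(a, 8 * q + s + i) \<in> ?S \<longleftrightarrow> a = tail_row n" for a
        by (auto simp: ladder_resolving_set_def tail_row_def)
      then show ?thesis by (simp add: tail_row_def)
    qed
    then show ?thesis by simp
  qed
  finally have card: "card ?S = 6 * q + (\<Sum>i<s. ?pattern i) + c" .
  have "n mod 8 = (s + c) mod 8"
    by (subst n) (simp add: mod_add_left_eq add.assoc)
  then have "tail_length (s + c) = c"
    unfolding c_def by (rule tail_length_cong[symmetric])
  with \<open>s < 8\<close> have "4 * (\<Sum>i<s. ?pattern i) + c \<le> 3 * s + 2"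
    by (rule ladder_pattern_prefix_bound)
  with card n show ?thesis by simp
qed

theorem lemma4p8:
  fixes n :: nat
  assumes "n \<ge> 2"
  shows "int (adim (cart_V (path_V 2) (path_V n)) (cart_E (path_V 2) (path_E 2) (path_V n) (path_E n)))
           \<le> \<lceil>(3 * real n - 1) / 4\<rceil>"
proof -
  let ?adim =
    "adim (cart_V (path_V 2) (path_V n)) (cart_E (path_V 2) (path_E 2) (path_V n) (path_E n))"
  have "finite (ladder_resolving_set n)"
    by (rule finite_subset[of _ "{..<2} \<times> {..<n}"]) (auto simp: ladder_resolving_set_def)
  then have "?adim \<le> card (ladder_resolving_set n)"
    using adj_resolving_ladder_resolving_set[OF assms] by (rule adim_le_card)
  with card_ladder_resolving_set[OF assms] have "4 * real ?adim \<le> 3 * real n + 2"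
    by linarith
  then have "real_of_int (int ?adim) - 1 < (3 * real n - 1) / 4" by simp
  then show ?thesis by (simp add: le_ceiling_iff)
qed

end
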